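(* Let $K\subseteq\mathbb{R}$ be a field, $K^+=\{x\in K:x>0\}$, and suppose $K^+=H_1\sqcup H_2\sqcup\cdots\sqcup H_\lambda$ is a partition of $K^+$ into pairwise disjoint subsets each closed under addition and multiplication (indexed by some index set of size $\lambda$). Then: (a) If $a, a+q\in H_1$ for some $q\in\mathbb{Q}^+$, then $a+r\in H_1$ for every $r\in\mathbb{Q}^+$. (b) If $\lambda$ is finite, then for every $a\in K^+$ and every $q\in\mathbb{Q}$ with $a+q>0$, the elements $a$ and $a+q$ lie in the same part of the partition. *)

theory Defs
  imports Complex_Main
begin

definition real_subfield :: "real set \<Rightarrow> bool" where
  "real_subfield K \<longleftrightarrow> 0 \<in> K \<and> 1 \<in> K \<and>
     (\<forall>x\<in>K. \<forall>y\<in>K. x + y \<in> K \<and> x * y \<in> K) \<and>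
     (\<forall>x\<in>K. - x \<in> K) \<and> (\<forall>x\<in>K. x \<noteq> 0 \<longrightarrow> inverse x \<in> K)"

definition pos_part :: "real set \<Rightarrow> real set" where
  "pos_part K = {x \<in> K. x > 0}"

end

theory Submission
  imports Defs
begin

text \<open>
  Every part is stable under multiplication by positive rationals: if \<open>c = m/n\<close>, then
  \<open>n (c x) = m x\<close> lies both in the part of \<open>c x\<close> and in the part of \<open>x\<close>.  In the same way
  \<open>y\<close> lies in the part of \<open>y\<^sup>2\<close>.  Hence a part containing \<open>a\<close> and \<open>a + q\<close> also contains
  every rational convex combination of them, and it contains \<open>a + 2 q\<close>, the square root of
  \<open>a\<^sup>2 + 4 q (a + q)\<close>.  Doubling the step until it exceeds \<open>r\<close> and filling in by convexity
  gives (a).  For (b), take a rational \<open>0 < t < a\<close>; by pigeonhole two of the points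
  \<open>a - t / (n + 1)\<close> share a part, they differ by a positive rational, and (a) spreads that part
  to \<open>a\<close> and \<open>a + q\<close>.
\<close>

lemma real_subfield_add: "real_subfield K \<Longrightarrow> x \<in> K \<Longrightarrow> y \<in> K \<Longrightarrow> x + y \<in> K"
  and real_subfield_mult: "real_subfield K \<Longrightarrow> x \<in> K \<Longrightarrow> y \<in> K \<Longrightarrow> x * y \<in> K"
  and real_subfield_uminus: "real_subfield K \<Longrightarrow> x \<in> K \<Longrightarrow> - x \<in> K"
  and real_subfield_inverse: "real_subfield K \<Longrightarrow> x \<in> K \<Longrightarrow> inverse x \<in> K"
  by (auto simp: real_subfield_def)

lemma real_subfield_diff: "real_subfield K \<Longrightarrow> x \<in> K \<Longrightarrow> y \<in> K \<Longrightarrow> x - y \<in> K"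
  using real_subfield_add real_subfield_uminus by (metis diff_conv_add_uminus)

lemma real_subfield_of_nat: "real_subfield K \<Longrightarrow> real n \<in> K"
  by (induction n) (auto simp: real_subfield_def)

lemma real_subfield_of_int:
  assumes "real_subfield K"
  shows "real_of_int z \<in> K"
proof (cases z rule: int_cases)
  case (nonneg n)
  then show ?thesis
    using real_subfield_of_nat[OF assms] by simp
next
  case (neg n)
  then have "real_of_int z = - real (Suc n)"
    by simp
  then show ?thesis
    using real_subfield_uminus[OF assms real_subfield_of_nat[OF assms]] by metis
qed

lemma Rats_subset_real_subfield: "real_subfield K \<Longrightarrow> \<rat> \<subseteq> K"
proof
  fix r :: real
  assume K: "real_subfield K" and "r \<in> \<rat>"
  then obtain a b where "r = real_of_int a * inverse (real_of_int b)"
    by (auto elim: Rats_cases' simp: divide_inverse)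
  then show "r \<in> K"
    using K by (simp add: real_subfield_mult real_subfield_inverse real_subfield_of_int)
qed

lemma Rats_pos_cases:
  assumes "c \<in> \<rat>" and "c > 0"
  obtains m n :: nat where "m > 0" and "n > 0" and "c = real m / real n"
proof -
  obtain a b where ab: "b > 0" "c = real_of_int a / real_of_int b"
    using assms(1) by (auto elim: Rats_cases')
  with assms(2) have "a > 0"
    by (metis divide_nonpos_pos linorder_not_less of_int_0_less_iff)
  with ab show thesis
    using that[of "nat a" "nat b"] by simp
qed

lemma ex_less_eq_values_of_finite_range:
  fixes f :: "nat \<Rightarrow> 'a"
  assumes "finite (range f)"
  obtains m n where "m < n" and "f m = f n"
proof -
  have "\<not> inj f"
    using assms finite_imageD by blast
  then obtain m n where "m \<noteq> n" "f m = f n"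
    unfolding inj_def by blast
  then show thesis
    using that by (metis linorder_neqE_nat)
qed

locale semiring_partition =
  fixes K :: "real set" and I :: "'i set" and H :: "'i \<Rightarrow> real set"
  assumes field: "real_subfield K"
    and cover: "(\<Union>i\<in>I. H i) = pos_part K"
    and disj: "\<And>i j. i \<in> I \<Longrightarrow> j \<in> I \<Longrightarrow> i \<noteq> j \<Longrightarrow> H i \<inter> H j = {}"
    and add_closed: "\<And>i x y. i \<in> I \<Longrightarrow> x \<in> H i \<Longrightarrow> y \<in> H i \<Longrightarrow> x + y \<in> H i"
    and mult_closed: "\<And>i x y. i \<in> I \<Longrightarrow> x \<in> H i \<Longrightarrow> y \<in> H i \<Longrightarrow> x * y \<in> H i"
begin

lemma part_subset_pos_part: "i \<in> I \<Longrightarrow> x \<in> H i \<Longrightarrow> x \<in> K \<and> x > 0"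
  using cover by (auto simp: pos_part_def)

lemma ex_part: "x \<in> K \<Longrightarrow> x > 0 \<Longrightarrow> \<exists>i\<in>I. x \<in> H i"
  using cover by (auto simp: pos_part_def)

lemma part_unique: "i \<in> I \<Longrightarrow> j \<in> I \<Longrightarrow> x \<in> H i \<Longrightarrow> x \<in> H j \<Longrightarrow> i = j"
  using disj by blast

lemma of_nat_mult_in_part:
  assumes "i \<in> I" and "x \<in> H i" and "n > 0"
  shows "real n * x \<in> H i"
  using assms(3)
proof (induction n rule: nat_induct_non_zero)
  case 1
  then show ?case using assms(2) by simp
next
  case (Suc n)
  then show ?case
    using add_closed[OF assms(1) Suc.IH assms(2)] by (simp add: algebra_simps)
qed

lemma Rats_mult_in_part:
  assumes i: "i \<in> I" and x: "x \<in> H i" and c: "c \<in> \<rat>" "c > 0"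
  shows "c * x \<in> H i"
proof -
  obtain m n :: nat where mn: "m > 0" "n > 0" "c = real m / real n"
    using c by (rule Rats_pos_cases)
  have "c * x \<in> K" "c * x > 0"
    using part_subset_pos_part[OF i x] c Rats_subset_real_subfield[OF field]
    by (auto intro: real_subfield_mult[OF field])
  then obtain j where j: "j \<in> I" "c * x \<in> H j"
    using ex_part by blast
  have "real n * (c * x) = real m * x"
    using mn by simp
  then have "real m * x \<in> H j"
    using of_nat_mult_in_part[OF j mn(2)] by metis
  with of_nat_mult_in_part[OF i x mn(1)] have "j = i"
    using part_unique i j(1) by blast
  with j show ?thesis by simp
qed

lemma in_part_if_square_in_part:
  assumes i: "i \<in> I" and y: "y \<in> K" "y > 0" and sq: "y * y \<in> H i"
  shows "y \<in> H i"
proof -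
  obtain j where j: "j \<in> I" "y \<in> H j"
    using ex_part y by blast
  with sq have "j = i"
    using mult_closed part_unique i by blast
  with j show ?thesis by simp
qed

lemma add_Rats_in_part_if_less:
  assumes i: "i \<in> I" and a: "a \<in> H i" "a + q \<in> H i" and q: "q \<in> \<rat>"
    and r: "r \<in> \<rat>" "0 < r" "r < q"
  shows "a + r \<in> H i"
proof -
  have "1 - r / q \<in> \<rat>" "1 - r / q > 0" "r / q \<in> \<rat>" "r / q > 0"
    using q r by auto
  then have "(1 - r / q) * a + (r / q) * (a + q) \<in> H i"
    by (intro add_closed[OF i] Rats_mult_in_part[OF i] a)
  moreover have "(1 - r / q) * a + (r / q) * (a + q) = a + r"
    using r by (simp add: field_simps)
  ultimately show ?thesis by simp
qed

lemma add_double_in_part: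
  assumes i: "i \<in> I" and a: "a \<in> H i" "a + q \<in> H i" and q: "q \<in> \<rat>" "q > 0"
  shows "a + 2 * q \<in> H i"
proof (rule in_part_if_square_in_part[OF i])
  have "a * a + (4 * q) * (a + q) \<in> H i"
    using add_closed[OF i mult_closed[OF i a(1) a(1)] Rats_mult_in_part[OF i a(2)]] q
    by simp
  then show "(a + 2 * q) * (a + 2 * q) \<in> H i"
    by (simp add: algebra_simps)
  have "2 * q \<in> K"
    using q(1) Rats_subset_real_subfield[OF field] by auto
  then show "a + 2 * q \<in> K" "a + 2 * q > 0"
    using part_subset_pos_part[OF i a(1)] q(2) by (auto intro: real_subfield_add[OF field])
qed

lemma add_power_two_mult_in_part:
  assumes i: "i \<in> I" and a: "a \<in> H i" "a + q \<in> H i" and q: "q \<in> \<rat>" "q > 0"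
  shows "a + 2 ^ k * q \<in> H i"
proof (induction k)
  case 0
  then show ?case using a(2) by simp
next
  case (Suc k)
  have "2 ^ k * q \<in> \<rat>" "2 ^ k * q > 0"
    using q by simp_all
  then show ?case
    using add_double_in_part[OF i a(1) Suc.IH] by (simp add: algebra_simps)
qed

lemma add_Rats_in_part:
  assumes i: "i \<in> I" and a: "a \<in> H i" "a + q \<in> H i" and q: "q \<in> \<rat>" "q > 0"
    and r: "r \<in> \<rat>" "r > 0"
  shows "a + r \<in> H i"
proof -
  obtain k where "r / q < 2 ^ k"
    using real_arch_pow[of 2 "r / q"] by auto
  then have "r < 2 ^ k * q"
    using q(2) by (simp add: divide_less_eq)
  then show ?thesis
    using add_Rats_in_part_if_less[OF i a(1) add_power_two_mult_in_part[OF i a q]] q(1) r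
    by simp
qed

lemma ex_part_add_pos_Rats:
  assumes fin: "finite I" and a: "a \<in> K" "a > 0" and q: "q \<in> \<rat>" "q > 0"
  shows "\<exists>i\<in>I. a \<in> H i \<and> a + q \<in> H i"
proof -
  obtain t where t: "t \<in> \<rat>" "0 < t" "t < a"
    using Rats_dense_in_real[OF a(2)] by blast
  define x where "x n = a - t / real (Suc n)" for n
  have "\<exists>i\<in>I. x n \<in> H i" for n
  proof (rule ex_part)
    have "t / real (Suc n) \<in> K"
      using t(1) Rats_subset_real_subfield[OF field] by auto
    then show "x n \<in> K"
      unfolding x_def using a(1) by (rule real_subfield_diff[OF field, rotated])
    have "t / real (Suc n) \<le> t"
      using t(2) by (simp add: divide_le_eq)
    then show "x n > 0"
      using t(3) by (simp add: x_def)
  qed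
  then obtain f where f: "\<And>n. f n \<in> I" "\<And>n. x n \<in> H (f n)"
    by metis
  have "range f \<subseteq> I"
    using f(1) by blast
  then have "finite (range f)"
    using fin by (rule finite_subset)
  then obtain m n where mn: "m < n" "f m = f n"
    by (rule ex_less_eq_values_of_finite_range)
  define d where "d = t / real (Suc m) - t / real (Suc n)"
  have d: "d \<in> \<rat>" "d > 0"
    using t mn(1) by (auto simp: d_def frac_less2)
  have start: "x m \<in> H (f n)" "x m + d \<in> H (f n)"
    using f(2)[of m] f(2)[of n] mn(2) by (simp_all add: x_def d_def)
  have "t / real (Suc m) \<in> \<rat>" "t / real (Suc m) > 0"
    using t by simp_all
  then have "x m + t / real (Suc m) \<in> H (f n)" "x m + (t / real (Suc m) + q) \<in> H (f n)"
    using add_Rats_in_part[OF f(1) start d] q by simp_all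
  then show ?thesis
    using f(1)[of n] by (auto simp: x_def)
qed

lemma ex_part_add_Rats:
  assumes fin: "finite I" and a: "a \<in> K" "a > 0" and q: "q \<in> \<rat>" and aq: "a + q > 0"
  shows "\<exists>i\<in>I. a \<in> H i \<and> a + q \<in> H i"
proof -
  consider "q > 0" | "q = 0" | "q < 0"
    by linarith
  then show ?thesis
  proof cases
    case 1
    then show ?thesis using ex_part_add_pos_Rats[OF fin a q] by blast
  next
    case 2
    then show ?thesis using ex_part[OF a] by auto
  next
    case 3
    have "a + q \<in> K"
      using q Rats_subset_real_subfield[OF field] by (blast intro: real_subfield_add[OF field a(1)])
    then show ?thesis
      using ex_part_add_pos_Rats[OF fin _ aq, of "- q"] q 3 by auto
  qed
qed

end

theorem lemma3p1:
  fixes K :: "real set" and I :: "'i set" and H :: "'i \<Rightarrow> real set"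
  assumes field: "real_subfield K"
    and cover: "(\<Union>i\<in>I. H i) = pos_part K"
    and disj: "\<And>i j. i \<in> I \<Longrightarrow> j \<in> I \<Longrightarrow> i \<noteq> j \<Longrightarrow> H i \<inter> H j = {}"
    and add_closed: "\<And>i x y. i \<in> I \<Longrightarrow> x \<in> H i \<Longrightarrow> y \<in> H i \<Longrightarrow> x + y \<in> H i"
    and mult_closed: "\<And>i x y. i \<in> I \<Longrightarrow> x \<in> H i \<Longrightarrow> y \<in> H i \<Longrightarrow> x * y \<in> H i"
  shows "(\<forall>i\<in>I. \<forall>a q. q \<in> \<rat> \<and> q > 0 \<and> a \<in> H i \<and> a + q \<in> H i \<longrightarrow>
            (\<forall>r. r \<in> \<rat> \<and> r > 0 \<longrightarrow> a + r \<in> H i))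
       \<and> (finite I \<longrightarrow>
            (\<forall>a\<in>pos_part K. \<forall>q\<in>\<rat>. a + q > 0 \<longrightarrow> (\<exists>i\<in>I. a \<in> H i \<and> a + q \<in> H i)))"
proof -
  interpret semiring_partition K I H
    using assms by unfold_locales
  show ?thesis
    using add_Rats_in_part ex_part_add_Rats by (auto simp: pos_part_def)
qed

end
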